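(* Let $G=(V,E)$ be a simple connected undirected graph and let $S=\{v_1,\dots,v_p\}$ be the output of Algorithm Stage-One on $G$. If $S$ is an independent set of $G$ and no vertex of $V\setminus S$ is adjacent to two or more vertices of $S$, then $S$ is a minimum dominating set of $G$, i.e. $|S|=\gamma(G)$.
   Context: A set $D\subseteq V$ is dominating if every vertex of $V\setminus D$ has a neighbor in $D$; $\gamma(G)$ is the minimum cardinality of a dominating set. An independent set is a set of pairwise non-adjacent vertices. For $v\in V$, $N(v)=\{u\in V:(u,v)\in E\}$; for $U\subseteq V$, $N(U)=\{v\in V\setminus U: v \text{ has a neighbor in } U\}$. Algorithm Stage-One: set $S_0=\emptyset$ and $h=0$. While $S_h$ is not a dominating set of $G$: increase $h$ by one; for each $v\in V\setminus S_{h-1}$ its active degree is $|N(v)\setminus (S_{h-1}\cup N(S_{h-1}))|$; if the maximum active degree over $V\setminus S_{h-1}$ is positive, let $v_h$ be any vertex of $V\setminus S_{h-1}$ of maximum active degree, otherwise let $v_h$ be any vertex of $V\setminus(S_{h-1}\cup N(S_{h-1}))$; set $S_h=S_{h-1}\cup\{v_h\}$. The output is $S=S_p$. *)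

theory Defs
  imports Main
begin

definition simple_graph :: "'a set \<Rightarrow> ('a \<Rightarrow> 'a \<Rightarrow> bool) \<Rightarrow> bool" where
  "simple_graph V E \<longleftrightarrow> finite V \<and> (\<forall>x y. E x y \<longrightarrow> x \<in> V \<and> y \<in> V)
     \<and> (\<forall>x y. E x y \<longrightarrow> E y x) \<and> (\<forall>x. \<not> E x x)"

definition connected_graph :: "'a set \<Rightarrow> ('a \<Rightarrow> 'a \<Rightarrow> bool) \<Rightarrow> bool" where
  "connected_graph V E \<longleftrightarrow> V \<noteq> {} \<and>
     (\<forall>u\<in>V. \<forall>v\<in>V. (\<lambda>x y. E x y \<and> x \<in> V \<and> y \<in> V)\<^sup>*\<^sup>* u v)"

definition nbhd :: "'a set \<Rightarrow> ('a \<Rightarrow> 'a \<Rightarrow> bool) \<Rightarrow> 'a \<Rightarrow> 'a set" where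
  "nbhd V E v = {u \<in> V. E u v}"

definition nbhd_set :: "'a set \<Rightarrow> ('a \<Rightarrow> 'a \<Rightarrow> bool) \<Rightarrow> 'a set \<Rightarrow> 'a set" where
  "nbhd_set V E U = {v \<in> V - U. \<exists>u\<in>U. E v u}"

definition dominating :: "'a set \<Rightarrow> ('a \<Rightarrow> 'a \<Rightarrow> bool) \<Rightarrow> 'a set \<Rightarrow> bool" where
  "dominating V E D \<longleftrightarrow> D \<subseteq> V \<and> (\<forall>v\<in>V - D. \<exists>u\<in>D. E v u)"

definition domination_number :: "'a set \<Rightarrow> ('a \<Rightarrow> 'a \<Rightarrow> bool) \<Rightarrow> nat" where
  "domination_number V E = Min (card ` {D. dominating V E D})"

definition independent :: "('a \<Rightarrow> 'a \<Rightarrow> bool) \<Rightarrow> 'a set \<Rightarrow> bool" where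
  "independent E S \<longleftrightarrow> (\<forall>u\<in>S. \<forall>v\<in>S. \<not> E u v)"

definition active_deg :: "'a set \<Rightarrow> ('a \<Rightarrow> 'a \<Rightarrow> bool) \<Rightarrow> 'a set \<Rightarrow> 'a \<Rightarrow> nat" where
  "active_deg V E S v = card (nbhd V E v - (S \<union> nbhd_set V E S))"

definition stage_one_choice :: "'a set \<Rightarrow> ('a \<Rightarrow> 'a \<Rightarrow> bool) \<Rightarrow> 'a set \<Rightarrow> 'a \<Rightarrow> bool" where
  "stage_one_choice V E S v \<longleftrightarrow> v \<in> V - S \<and>
     (let m = Max (active_deg V E S ` (V - S)) in
       if m > 0 then active_deg V E S v = m
       else v \<in> V - (S \<union> nbhd_set V E S))"

text \<open>vs = [v_1, ..., v_p] is a possible run of Algorithm Stage-One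
(with any tie-breaking); its output is set vs. S_h = set (take h vs).\<close>
definition stage_one_run :: "'a set \<Rightarrow> ('a \<Rightarrow> 'a \<Rightarrow> bool) \<Rightarrow> 'a list \<Rightarrow> bool" where
  "stage_one_run V E vs \<longleftrightarrow>
     (\<forall>h < length vs. \<not> dominating V E (set (take h vs)) \<and>
                       stage_one_choice V E (set (take h vs)) (vs ! h))
     \<and> dominating V E (set vs)"

end

theory Submission
  imports Defs
begin

text \<open>An independent set S in which no outside vertex sees two members has pairwise disjoint
closed neighbourhoods. Every dominating set D meets each of them, so choosing for every s in S
a vertex of D dominating it gives an injection S \<rightarrow> D, and a dominating S is therefore minimum.\<close>

lemma dominating_subset: "dominating V E D \<Longrightarrow> D \<subseteq> V"
  unfolding dominating_def by blast

lemma stage_one_run_dominating: "stage_one_run V E vs \<Longrightarrow> dominating V E (set vs)"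
  unfolding stage_one_run_def by blast

lemma finite_dominating_sizes:
  assumes "finite V"
  shows "finite (card ` {D. dominating V E D})"
proof -
  have "{D. dominating V E D} \<subseteq> Pow V"
    using dominating_subset by blast
  then show ?thesis
    using assms by (meson finite_Pow_iff finite_imageI finite_subset)
qed

lemma domination_number_eqI:
  assumes "finite V" and "dominating V E S"
    and "\<And>D. dominating V E D \<Longrightarrow> card S \<le> card D"
  shows "domination_number V E = card S"
  unfolding domination_number_def
proof (rule Min_eqI[OF finite_dominating_sizes[OF \<open>finite V\<close>]])
  show "card S \<in> card ` {D. dominating V E D}"
    using assms(2) by blast
qed (use assms(3) in blast)

lemma card_le_dominating_if_unique_neighbour:
  assumes "finite V" and sym: "\<And>x y. E x y \<Longrightarrow> E y x" and "S \<subseteq> V"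
    and indep: "independent E S"
    and unique: "\<forall>v\<in>V - S. card {u \<in> S. E v u} \<le> 1"
    and D: "dominating V E D"
  shows "card S \<le> card D"
proof -
  have "\<forall>s\<in>S. \<exists>d\<in>D. d = s \<or> E s d"
    using D \<open>S \<subseteq> V\<close> unfolding dominating_def by blast
  then obtain f where f: "\<And>s. s \<in> S \<Longrightarrow> f s \<in> D \<and> (f s = s \<or> E s (f s))"
    by metis
  have "inj_on f S"
  proof (rule inj_onI, rule ccontr)
    fix s t assume s: "s \<in> S" and t: "t \<in> S" and eq: "f s = f t" and "s \<noteq> t"
    show False
    proof (cases "f s \<in> S")
      case True
      then have "f s = s" and "f t = t"
        using f[OF s] f[OF t] eq s t indep unfolding independent_def by auto
      then show False
        using eq \<open>s \<noteq> t\<close> by simp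
    next
      case False
      then have "E s (f s)" and "E t (f s)"
        using f[OF s] f[OF t] eq s t by auto
      moreover have "f s \<in> V - S"
        using False f[OF s] dominating_subset[OF D] by blast
      ultimately have "{s, t} \<subseteq> {u \<in> S. E (f s) u}" and "card {u \<in> S. E (f s) u} \<le> 1"
        using s t sym unique by auto
      moreover have "finite {u \<in> S. E (f s) u}"
        using \<open>S \<subseteq> V\<close> \<open>finite V\<close> by (simp add: finite_subset)
      ultimately have "card {s, t} \<le> 1"
        by (meson card_mono order_trans)
      then show False
        using \<open>s \<noteq> t\<close> by simp
    qed
  qed
  moreover have "finite D"
    using dominating_subset[OF D] \<open>finite V\<close> finite_subset by blast
  ultimately show ?thesis
    using card_inj_on_le f by blast
qed

theorem proposition2:
  fixes V :: "'a set" and E :: "'a \<Rightarrow> 'a \<Rightarrow> bool" and vs :: "'a list"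
  assumes "simple_graph V E"
    and "connected_graph V E"
    and "stage_one_run V E vs"
    and "independent E (set vs)"
    and "\<forall>v\<in>V - set vs. card {u \<in> set vs. E v u} \<le> 1"
  shows "dominating V E (set vs) \<and> card (set vs) = domination_number V E"
proof -
  have "finite V" and sym: "\<And>x y. E x y \<Longrightarrow> E y x"
    using assms(1) unfolding simple_graph_def by blast+
  have dom: "dominating V E (set vs)"
    using stage_one_run_dominating[OF assms(3)] .
  have "domination_number V E = card (set vs)"
    using domination_number_eqI[OF \<open>finite V\<close> dom]
      card_le_dominating_if_unique_neighbour[OF \<open>finite V\<close> sym dominating_subset[OF dom] assms(4,5)] by blast
  with dom show ?thesis
    by simp
qed

end
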